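(* Let $A^\star\in\mathbb{R}^{n\times n}$, $B^\star\in\mathbb{R}^{n\times m}$, $C^\star\in\mathbb{R}^{p\times n}$ with $(A^\star,C^\star)$ observable with observability index $\ell^\star$, let data be generated as in the context and assume $\Delta_{10}\Delta_{10}^\top\preceq\Theta$. If $\sigma_{\min}(S_0S_0^\top)/\sigma_{\max}(\Theta_{22})>4$, then $\Psi_0\Psi_0^\top\succ\Theta_{22}$.
   Context: $\sigma_{\min},\sigma_{\max}$ denote smallest and largest singular values. Let $\ell=\ell^\star$. Data: for $k=0,\dots,T$ ($T\ge\ell$), $x(k+1)=A^\star x(k)+B^\star u(k)$, $y(k)=C^\star x(k)$ from some $x(0)$; $u^{\mathrm m}=u+d^u$, $y^{\mathrm m}=y+d^y$. Matrices with columns $j=0,\dots,T-\ell$: column $j$ of $\Psi_0$ is $(y^{\mathrm m}(j),\dots,y^{\mathrm m}(j+\ell-1),u^{\mathrm m}(j),\dots,u^{\mathrm m}(j+\ell-1))$; of $S_0$ is $(y(j),\dots,y(j+\ell-1),u(j),\dots,u(j+\ell-1))$; of $\Delta_{10}$ is $(d^y(j+\ell),d^y(j),\dots,d^y(j+\ell-1),d^u(j),\dots,d^u(j+\ell-1))$. $\Theta=\Theta^\top\succeq0$ of size $p+p\ell+m\ell$ is given, partitioned as $\begin{bmatrix}\Theta_{11}&\Theta_{12}\\\Theta_{12}^\top&\Theta_{22}\end{bmatrix}$ with $\Theta_{11}\in\mathbb{R}^{p\times p}$. *)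

theory Defs
  imports Complex_Main "Jordan_Normal_Form.Char_Poly" "Jordan_Normal_Form.DL_Rank"
begin

definition sigma_max :: "real mat \<Rightarrow> real" where
  "sigma_max M = sqrt (Max {k. eigenvalue (transpose_mat M * M) k})"

definition sigma_min :: "real mat \<Rightarrow> real" where
  "sigma_min M = sqrt (Min {k. eigenvalue (transpose_mat M * M) k})"

definition loewner_le :: "real mat \<Rightarrow> real mat \<Rightarrow> bool" where
  "loewner_le A B = (\<exists>d. A \<in> carrier_mat d d \<and> B \<in> carrier_mat d d \<and>
      (\<forall>x \<in> carrier_vec d. x \<bullet> ((B - A) *\<^sub>v x) \<ge> 0))"

definition loewner_less :: "real mat \<Rightarrow> real mat \<Rightarrow> bool" where
  "loewner_less A B = (\<exists>d. A \<in> carrier_mat d d \<and> B \<in> carrier_mat d d \<and>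
      (\<forall>x \<in> carrier_vec d. x \<noteq> 0\<^sub>v d \<longrightarrow> x \<bullet> ((B - A) *\<^sub>v x) > 0))"

text \<open>Observability matrix [C; CA; ...; CA^(l-1)] (size (l*p) x n, where C is p x n).\<close>
definition obs_mat :: "real mat \<Rightarrow> real mat \<Rightarrow> nat \<Rightarrow> real mat" where
  "obs_mat A C l = mat (l * dim_row C) (dim_col C)
     (\<lambda>(i, j). (C * A ^\<^sub>m (i div dim_row C)) $$ (i mod dim_row C, j))"

definition mat_rank :: "real mat \<Rightarrow> nat" where
  "mat_rank M = vec_space.rank (dim_row M) M"

definition observable :: "real mat \<Rightarrow> real mat \<Rightarrow> bool" where
  "observable A C = (mat_rank (obs_mat A C (dim_col C)) = dim_col C)"

definition obs_index :: "real mat \<Rightarrow> real mat \<Rightarrow> nat" where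
  "obs_index A C = (LEAST l. mat_rank (obs_mat A C l) = dim_col C)"

text \<open>Stacked data matrices; columns j = 0..T-l.
  Rows: first l blocks of size p (signal w), then l blocks of size m (signal v).\<close>
definition hankel_yu :: "nat \<Rightarrow> nat \<Rightarrow> nat \<Rightarrow> nat \<Rightarrow> (nat \<Rightarrow> real vec) \<Rightarrow> (nat \<Rightarrow> real vec) \<Rightarrow> real mat" where
  "hankel_yu p m l T w v = mat (p * l + m * l) (T - l + 1)
     (\<lambda>(i, j). if i < p * l then w (j + i div p) $ (i mod p)
              else v (j + (i - p * l) div m) $ ((i - p * l) mod m))"

definition delta10 :: "nat \<Rightarrow> nat \<Rightarrow> nat \<Rightarrow> nat \<Rightarrow> (nat \<Rightarrow> real vec) \<Rightarrow> (nat \<Rightarrow> real vec) \<Rightarrow> real mat" where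
  "delta10 p m l T dy du = mat (p + p * l + m * l) (T - l + 1)
     (\<lambda>(i, j). if i < p then dy (j + l) $ i
              else hankel_yu p m l T dy du $$ (i - p, j))"

definition theta22 :: "nat \<Rightarrow> real mat \<Rightarrow> real mat" where
  "theta22 p Th = mat (dim_row Th - p) (dim_col Th - p) (\<lambda>(i, j). Th $$ (i + p, j + p))"

end

theory Submission
  imports Defs "HOL-Analysis.Function_Topology"
begin

text \<open>The measured data matrix is \<open>Psi0 = S0 + D\<close>, where \<open>D\<close> is the Hankel matrix of the noise,
  i.e. \<open>Delta10\<close> without its top block. Testing \<open>Delta10 Delta10\<^sup>T \<preceq> Theta\<close> on vectors \<open>(0, x)\<close>
  gives \<open>D D\<^sup>T \<preceq> Theta22\<close>. With \<open>a = sigma_min (S0 S0\<^sup>T)\<close> and \<open>b = sigma_max Theta22\<close>, the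
  elementary bound \<open>|s + e|\<^sup>2 \<ge> |s|\<^sup>2 / 2 - |e|\<^sup>2\<close> yields
  \<open>|Psi0\<^sup>T x|\<^sup>2 \<ge> (a / 2 - b) |x|\<^sup>2 > b |x|\<^sup>2 \<ge> x\<^sup>T Theta22 x\<close> because \<open>a > 4 b\<close>.
  The singular values enter only through Rayleigh-quotient bounds, obtained from a minimiser of
  the quadratic form on the unit sphere, which is an eigenvector.\<close>

lemma scalar_prod_self_nonneg: "0 \<le> (v :: real vec) \<bullet> v"
  using conjugate_square_ge_0_vec[of v] by simp

lemma scalar_prod_self_eq_0_iff:
  "(v :: real vec) \<in> carrier_vec n \<Longrightarrow> v \<bullet> v = 0 \<longleftrightarrow> v = 0\<^sub>v n"
  using conjugate_square_eq_0_vec[of v n] by simp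

lemma scalar_prod_self_pos:
  "(v :: real vec) \<in> carrier_vec n \<Longrightarrow> v \<noteq> 0\<^sub>v n \<Longrightarrow> 0 < v \<bullet> v"
  using scalar_prod_self_nonneg[of v] scalar_prod_self_eq_0_iff[of v n] by linarith

lemma scalar_prod_eq_sum:
  "v \<in> carrier_vec d \<Longrightarrow> w \<in> carrier_vec d \<Longrightarrow> v \<bullet> w = (\<Sum>i<d. v $ i * w $ i)"
  unfolding scalar_prod_def by (simp add: atLeast0LessThan)

lemma scalar_prod_minus_mult_mat_vec:
  fixes A B :: "'a :: comm_ring mat"
  assumes "A \<in> carrier_mat r c" "B \<in> carrier_mat r c" "x \<in> carrier_vec c" "y \<in> carrier_vec r"
  shows "y \<bullet> ((A - B) *\<^sub>v x) = y \<bullet> (A *\<^sub>v x) - y \<bullet> (B *\<^sub>v x)"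
  using assms by (simp add: minus_mult_distrib_mat_vec scalar_prod_minus_distrib[of y r])

lemma scalar_prod_mult_transpose_self:
  fixes A :: "'a :: comm_semiring_0 mat"
  assumes A: "A \<in> carrier_mat r c" and x: "x \<in> carrier_vec r"
  shows "x \<bullet> ((A * transpose_mat A) *\<^sub>v x) = (transpose_mat A *\<^sub>v x) \<bullet> (transpose_mat A *\<^sub>v x)"
  using A x transpose_vec_mult_scalar[OF A, of "transpose_mat A *\<^sub>v x" x] by simp

lemma scalar_prod_add_self_ge:
  fixes s e :: "real vec"
  assumes s: "s \<in> carrier_vec N" and e: "e \<in> carrier_vec N"
  shows "s \<bullet> s / 2 - e \<bullet> e \<le> (s + e) \<bullet> (s + e)"
proof -
  have "s \<bullet> s / 2 - e \<bullet> e = (\<Sum>i<N. (s $ i)\<^sup>2 / 2 - (e $ i)\<^sup>2)"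
    using s e by (simp add: scalar_prod_eq_sum sum_subtractf sum_divide_distrib power2_eq_square)
  also have "\<dots> \<le> (\<Sum>i<N. (s $ i + e $ i)\<^sup>2)"
  proof (rule sum_mono)
    fix i
    have "(s $ i + e $ i)\<^sup>2 - ((s $ i)\<^sup>2 / 2 - (e $ i)\<^sup>2) = (s $ i + 2 * e $ i)\<^sup>2 / 2"
      by (simp add: power2_eq_square field_simps)
    moreover have "0 \<le> (s $ i + 2 * e $ i)\<^sup>2 / 2" by simp
    ultimately show "(s $ i)\<^sup>2 / 2 - (e $ i)\<^sup>2 \<le> (s $ i + e $ i)\<^sup>2" by linarith
  qed
  also have "\<dots> = (s + e) \<bullet> (s + e)"
    using s e by (simp add: scalar_prod_eq_sum[of "s + e" N] power2_eq_square)
  finally show ?thesis .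
qed

text \<open>Quadratic forms act on \<open>nat \<Rightarrow> real\<close> rather than on \<open>vec\<close>, which carries no topology; only
  the values below \<open>d\<close> matter, and compactness is taken in the product topology on \<open>{..<d}\<close>.\<close>
definition quad_form :: "(nat \<Rightarrow> nat \<Rightarrow> real) \<Rightarrow> nat \<Rightarrow> (nat \<Rightarrow> real) \<Rightarrow> real" where
  "quad_form a d f = (\<Sum>i<d. f i * (\<Sum>j<d. a i j * f j))"

lemma quad_form_scale: "quad_form a d (\<lambda>i. c * f i) = c\<^sup>2 * quad_form a d f"
  unfolding quad_form_def power2_eq_square by (simp add: sum_distrib_left algebra_simps)

lemma scalar_prod_mult_mat_vec_eq_quad_form:
  assumes "M \<in> carrier_mat d d" "x \<in> carrier_vec d"
  shows "x \<bullet> (M *\<^sub>v x) = quad_form (\<lambda>i j. M $$ (i, j)) d (\<lambda>i. x $ i)"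
  using assms unfolding quad_form_def
  by (auto simp: scalar_prod_eq_sum[of _ d] scalar_prod_def atLeast0LessThan intro!: sum.cong)

lemma quad_form_attains_min_on_unit_sphere:
  assumes d: "0 < d"
  shows "\<exists>f0. (\<Sum>i<d. (f0 i)\<^sup>2) = 1 \<and>
    (\<forall>f. (\<Sum>i<d. (f i)\<^sup>2) = 1 \<longrightarrow> quad_form a d f0 \<le> quad_form a d f)"
proof -
  let ?X = "product_topology (\<lambda>_. euclideanreal) {..<d}"
  let ?norm = "\<lambda>f. \<Sum>i<d. (f i)\<^sup>2"
  define S where "S = {f \<in> topspace ?X. ?norm f = 1} \<inter> PiE {..<d} (\<lambda>_. {-1..1})"
  have proj: "continuous_map ?X euclideanreal (\<lambda>f. f i)" if "i \<in> {..<d}" for i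
    using continuous_map_product_projection[OF that, of "\<lambda>_. euclideanreal"] by simp
  have "continuous_map ?X euclideanreal ?norm"
    by (intro continuous_map_sum continuous_map_real_pow proj) auto
  then have "closedin ?X {f \<in> topspace ?X. ?norm f \<in> {1}}"
    by (rule closedin_continuous_map_preimage) simp
  moreover have "compactin ?X (PiE {..<d} (\<lambda>_. {-1..1}))"
    by (subst compactin_PiE) (auto simp: compactin_euclidean_iff)
  ultimately have "compactin ?X S"
    unfolding S_def by (auto intro: closed_Int_compactin)
  moreover have "continuous_map ?X euclideanreal (quad_form a d)"
    unfolding quad_form_def
    by (intro continuous_map_sum continuous_map_real_mult continuous_map_real_mult_left proj) auto
  ultimately have "compact (quad_form a d ` S)"
    using image_compactin compactin_euclidean_iff by blast
  moreover have "restrict (\<lambda>i. if i = 0 then 1 else 0 :: real) {..<d} \<in> S"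
  proof -
    have "?norm (restrict (\<lambda>i. if i = 0 then 1 else 0 :: real) {..<d}) = (\<Sum>i<d. if i = 0 then 1 else 0)"
      by (intro sum.cong) auto
    then show ?thesis using d by (auto simp: S_def topspace_product_topology)
  qed
  ultimately obtain f0 where f0: "f0 \<in> S" and min: "\<And>g. g \<in> S \<Longrightarrow> quad_form a d f0 \<le> quad_form a d g"
    using compact_attains_inf[of "quad_form a d ` S"] by blast
  show ?thesis
  proof (intro exI conjI allI impI)
    show "?norm f0 = 1" using f0 by (simp add: S_def)
    fix f :: "nat \<Rightarrow> real" assume f: "?norm f = 1"
    have "\<bar>f i\<bar> \<le> 1" if "i < d" for i
      using member_le_sum[of i "{..<d}" "\<lambda>k. (f k)\<^sup>2"] that f by (simp add: abs_square_le_1)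
    then have "restrict f {..<d} \<in> S"
      using f by (auto simp: S_def topspace_product_topology abs_le_iff)
    moreover have "quad_form a d (restrict f {..<d}) = quad_form a d f"
      unfolding quad_form_def by (intro sum.cong) auto
    ultimately show "quad_form a d f0 \<le> quad_form a d f" using min by metis
  qed
qed

lemma rayleigh_quotient_attains_min:
  fixes M :: "real mat"
  assumes M: "M \<in> carrier_mat d d" and d: "0 < d"
  shows "\<exists>v \<in> carrier_vec d. v \<bullet> v = 1 \<and>
    (\<forall>x \<in> carrier_vec d. (v \<bullet> (M *\<^sub>v v)) * (x \<bullet> x) \<le> x \<bullet> (M *\<^sub>v x))"
proof -
  let ?a = "\<lambda>i j. M $$ (i, j)"
  obtain f0 where f0: "(\<Sum>i<d. (f0 i)\<^sup>2) = 1"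
    and min: "\<And>f. (\<Sum>i<d. (f i)\<^sup>2) = 1 \<Longrightarrow> quad_form ?a d f0 \<le> quad_form ?a d f"
    using quad_form_attains_min_on_unit_sphere[OF d] by blast
  define v where "v = vec d f0"
  have v: "v \<in> carrier_vec d" by (simp add: v_def)
  have "v \<bullet> v = (\<Sum>i<d. v $ i * v $ i)" by (rule scalar_prod_eq_sum[OF v v])
  also have "\<dots> = 1" using f0 by (simp add: v_def power2_eq_square)
  finally have "v \<bullet> v = 1" .
  moreover have "v \<bullet> (M *\<^sub>v v) = quad_form ?a d (\<lambda>i. v $ i)"
    by (rule scalar_prod_mult_mat_vec_eq_quad_form[OF M v])
  moreover have "quad_form ?a d (\<lambda>i. v $ i) = quad_form ?a d f0"
    unfolding quad_form_def v_def by (intro sum.cong) auto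
  moreover have "quad_form ?a d f0 * (x \<bullet> x) \<le> x \<bullet> (M *\<^sub>v x)" if x: "x \<in> carrier_vec d" for x
  proof (cases "x = 0\<^sub>v d")
    case True
    then show ?thesis using M by simp
  next
    case False
    have xx: "0 < x \<bullet> x" using scalar_prod_self_pos[OF x False] .
    define r where "r = sqrt (x \<bullet> x)"
    have r: "0 < r" "r\<^sup>2 = x \<bullet> x" using xx by (auto simp: r_def)
    have "(\<Sum>i<d. (x $ i / r)\<^sup>2) = (x \<bullet> x) / r\<^sup>2"
      by (simp add: scalar_prod_eq_sum[OF x x] power_divide sum_divide_distrib power2_eq_square)
    then have "quad_form ?a d f0 \<le> quad_form ?a d (\<lambda>i. (1 / r) * x $ i)"
      using r xx by (intro min) simp
    also have "\<dots> = x \<bullet> (M *\<^sub>v x) / r\<^sup>2"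
      unfolding quad_form_scale scalar_prod_mult_mat_vec_eq_quad_form[OF M x] by (simp add: power_divide)
    finally show ?thesis using r xx by (simp add: pos_le_divide_eq)
  qed
  ultimately show ?thesis using v by auto
qed

lemma nonneg_quadratic_linear_coeff_eq_0:
  fixes a c :: real
  assumes "\<And>t. 0 \<le> t * a + t\<^sup>2 * c"
  shows "a = 0"
proof (rule ccontr)
  assume "a \<noteq> 0"
  define k where "k = \<bar>c\<bar> + 1"
  have k: "0 < k" "c < k" by (auto simp: k_def)
  have "(- a / k) * a + (- a / k)\<^sup>2 * c = a\<^sup>2 / k\<^sup>2 * (c - k)"
    using k by (simp add: power2_eq_square field_simps)
  also have "\<dots> < 0"
    using \<open>a \<noteq> 0\<close> k by (intro mult_pos_neg) auto
  finally show False using assms[of "- a / k"] by simp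
qed

text \<open>A minimiser of the Rayleigh quotient of a symmetric matrix is an eigenvector: moving from
  \<open>v\<close> in the direction of the residual \<open>w = M v - \<mu> v\<close> changes the nonnegative form
  \<open>x \<bullet> M x - \<mu> x \<bullet> x\<close> at first order by \<open>2 t (w \<bullet> w)\<close>.\<close>
lemma rayleigh_minimizer_eigenvector:
  fixes M :: "real mat"
  assumes M: "M \<in> carrier_mat d d" and sym: "transpose_mat M = M" and v: "v \<in> carrier_vec d"
    and min: "\<And>x. x \<in> carrier_vec d \<Longrightarrow> \<mu> * (x \<bullet> x) \<le> x \<bullet> (M *\<^sub>v x)"
    and at_v: "v \<bullet> (M *\<^sub>v v) = \<mu> * (v \<bullet> v)"
  shows "M *\<^sub>v v = \<mu> \<cdot>\<^sub>v v"
proof -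
  define w where "w = M *\<^sub>v v - \<mu> \<cdot>\<^sub>v v"
  define q where "q x = x \<bullet> (M *\<^sub>v x) - \<mu> * (x \<bullet> x)" for x
  have w: "w \<in> carrier_vec d" using M v by (simp add: w_def)
  have Mv: "M *\<^sub>v v \<in> carrier_vec d" using M v by simp
  have symm: "v \<bullet> (M *\<^sub>v w) = w \<bullet> (M *\<^sub>v v)"
    using transpose_vec_mult_scalar[OF M w v] comm_scalar_prod[OF Mv w] sym by simp
  have "w \<bullet> w = w \<bullet> (M *\<^sub>v v) - w \<bullet> (\<mu> \<cdot>\<^sub>v v)"
    using scalar_prod_minus_distrib[OF w Mv, of "\<mu> \<cdot>\<^sub>v v"] v unfolding w_def by simp
  then have residual: "w \<bullet> (M *\<^sub>v v) - \<mu> * (w \<bullet> v) = w \<bullet> w"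
    using w v by simp
  have expand: "q (v + t \<cdot>\<^sub>v w) = t * (2 * (w \<bullet> w)) + t\<^sup>2 * q w" for t
  proof -
    have "q (v + t \<cdot>\<^sub>v w) = q v + t * (v \<bullet> (M *\<^sub>v w) + w \<bullet> (M *\<^sub>v v) - 2 * \<mu> * (w \<bullet> v))
        + t\<^sup>2 * q w"
      using M v w Mv
      by (simp add: q_def mult_add_distrib_mat_vec mult_mat_vec[OF M w] add_scalar_prod_distrib[of _ d]
          scalar_prod_add_distrib[of _ d] comm_scalar_prod[OF v w] power2_eq_square algebra_simps)
    then show ?thesis using at_v symm residual by (simp add: q_def algebra_simps)
  qed
  have "0 \<le> t * (2 * (w \<bullet> w)) + t\<^sup>2 * q w" for t
  proof -
    have "0 \<le> q (v + t \<cdot>\<^sub>v w)" using min[of "v + t \<cdot>\<^sub>v w"] v w by (simp add: q_def)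
    then show ?thesis by (simp only: expand)
  qed
  then have "2 * (w \<bullet> w) = 0" by (rule nonneg_quadratic_linear_coeff_eq_0)
  then have w0: "w = 0\<^sub>v d" using scalar_prod_self_eq_0_iff[OF w] by simp
  show ?thesis
  proof (rule eq_vecI)
    fix i assume i: "i < dim_vec (\<mu> \<cdot>\<^sub>v v)"
    then have "w $ i = 0" using w0 v by simp
    then show "(M *\<^sub>v v) $ i = (\<mu> \<cdot>\<^sub>v v) $ i" using i v M by (simp add: w_def)
  qed (use M v in simp)
qed

lemma symmetric_min_eigenpair:
  fixes M :: "real mat"
  assumes M: "M \<in> carrier_mat d d" and sym: "transpose_mat M = M" and d: "0 < d"
  obtains \<mu> v where "eigenvector M v \<mu>"
    and "\<And>x. x \<in> carrier_vec d \<Longrightarrow> \<mu> * (x \<bullet> x) \<le> x \<bullet> (M *\<^sub>v x)"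
proof -
  obtain v where v: "v \<in> carrier_vec d" "v \<bullet> v = 1"
    and min: "\<And>x. x \<in> carrier_vec d \<Longrightarrow> (v \<bullet> (M *\<^sub>v v)) * (x \<bullet> x) \<le> x \<bullet> (M *\<^sub>v x)"
    using rayleigh_quotient_attains_min[OF M d] by blast
  have "M *\<^sub>v v = (v \<bullet> (M *\<^sub>v v)) \<cdot>\<^sub>v v"
    using v by (intro rayleigh_minimizer_eigenvector[OF M sym v(1) min]) simp_all
  moreover have "v \<noteq> 0\<^sub>v d" using v by auto
  ultimately have "eigenvector M v (v \<bullet> (M *\<^sub>v v))"
    using M v by (simp add: eigenvector_def)
  then show ?thesis using min that by blast
qed

lemma finite_eigenvalues:
  assumes "(A :: real mat) \<in> carrier_mat n n"
  shows "finite {k. eigenvalue A k}"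
proof -
  have "char_poly A \<noteq> 0" using degree_monic_char_poly[OF assms] by auto
  then show ?thesis using eigenvalue_root_char_poly[OF assms] poly_roots_finite by simp
qed

lemma eigenvalue_transpose_mult_self_power2:
  fixes M :: "real mat"
  assumes M: "M \<in> carrier_mat d d" and sym: "transpose_mat M = M" and ev: "eigenvector M v \<mu>"
  shows "eigenvalue (transpose_mat M * M) (\<mu>\<^sup>2)"
proof -
  have v: "v \<in> carrier_vec d" "v \<noteq> 0\<^sub>v d" and Mv: "M *\<^sub>v v = \<mu> \<cdot>\<^sub>v v"
    using ev M by (auto simp: eigenvector_def)
  have "(transpose_mat M * M) *\<^sub>v v = M *\<^sub>v (M *\<^sub>v v)"
    using sym M v by simp
  also have "\<dots> = \<mu>\<^sup>2 \<cdot>\<^sub>v v"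
    using M v by (simp add: Mv mult_mat_vec power2_eq_square smult_smult_assoc)
  finally show ?thesis using v M by (auto simp: eigenvalue_def eigenvector_def)
qed

lemma sigma_min_le_eigenvalue:
  fixes M :: "real mat"
  assumes M: "M \<in> carrier_mat d d" and sym: "transpose_mat M = M"
    and ev: "eigenvector M v \<mu>" and "0 \<le> \<mu>"
  shows "sigma_min M \<le> \<mu>"
proof -
  have "Min {k. eigenvalue (transpose_mat M * M) k} \<le> \<mu>\<^sup>2"
    using M eigenvalue_transpose_mult_self_power2[OF M sym ev]
    by (intro Min_le finite_eigenvalues[of _ d]) auto
  then have "sigma_min M \<le> sqrt (\<mu>\<^sup>2)"
    unfolding sigma_min_def by (rule real_sqrt_le_mono)
  then show ?thesis using \<open>0 \<le> \<mu>\<close> by simp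
qed

lemma abs_eigenvalue_le_sigma_max:
  fixes M :: "real mat"
  assumes M: "M \<in> carrier_mat d d" and sym: "transpose_mat M = M" and ev: "eigenvector M v \<mu>"
  shows "\<bar>\<mu>\<bar> \<le> sigma_max M"
proof -
  have "\<mu>\<^sup>2 \<le> Max {k. eigenvalue (transpose_mat M * M) k}"
    using M eigenvalue_transpose_mult_self_power2[OF M sym ev]
    by (intro Max_ge finite_eigenvalues[of _ d]) auto
  then have "sqrt (\<mu>\<^sup>2) \<le> sigma_max M"
    unfolding sigma_max_def by (rule real_sqrt_le_mono)
  then show ?thesis by simp
qed

lemma sigma_min_le_rayleigh_quotient:
  fixes M :: "real mat"
  assumes M: "M \<in> carrier_mat d d" and sym: "transpose_mat M = M"
    and psd: "\<And>y. y \<in> carrier_vec d \<Longrightarrow> 0 \<le> y \<bullet> (M *\<^sub>v y)"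
    and x: "x \<in> carrier_vec d"
  shows "sigma_min M * (x \<bullet> x) \<le> x \<bullet> (M *\<^sub>v x)"
proof (cases "d = 0")
  case True
  then show ?thesis using x M by (simp add: scalar_prod_def)
next
  case False
  then obtain \<mu> v where ev: "eigenvector M v \<mu>"
    and min: "\<And>y. y \<in> carrier_vec d \<Longrightarrow> \<mu> * (y \<bullet> y) \<le> y \<bullet> (M *\<^sub>v y)"
    using symmetric_min_eigenpair[OF M sym] by blast
  have v: "v \<in> carrier_vec d" "v \<noteq> 0\<^sub>v d" and Mv: "M *\<^sub>v v = \<mu> \<cdot>\<^sub>v v"
    using ev M by (auto simp: eigenvector_def)
  have "0 \<le> \<mu> * (v \<bullet> v)" using psd[OF v(1)] v by (simp add: Mv)
  then have "0 \<le> \<mu>" using scalar_prod_self_pos[OF v] by (simp add: zero_le_mult_iff)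
  then have "sigma_min M * (x \<bullet> x) \<le> \<mu> * (x \<bullet> x)"
    using sigma_min_le_eigenvalue[OF M sym ev] scalar_prod_self_nonneg[of x]
    by (intro mult_right_mono)
  also have "\<dots> \<le> x \<bullet> (M *\<^sub>v x)" using min[OF x] .
  finally show ?thesis .
qed

lemma rayleigh_quotient_le_sigma_max:
  fixes M :: "real mat"
  assumes M: "M \<in> carrier_mat d d" and sym: "transpose_mat M = M" and x: "x \<in> carrier_vec d"
  shows "x \<bullet> (M *\<^sub>v x) \<le> sigma_max M * (x \<bullet> x)"
proof (cases "d = 0")
  case True
  then show ?thesis using x M by (simp add: scalar_prod_def)
next
  case False
  have "- M \<in> carrier_mat d d" "transpose_mat (- M) = - M"
    using M sym by (auto simp: transpose_uminus)
  then obtain \<nu> v where ev: "eigenvector (- M) v \<nu>"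
    and min: "\<And>y. y \<in> carrier_vec d \<Longrightarrow> \<nu> * (y \<bullet> y) \<le> y \<bullet> ((- M) *\<^sub>v y)"
    using symmetric_min_eigenpair False by blast
  have v: "v \<in> carrier_vec d" "v \<noteq> 0\<^sub>v d" and Mv: "(- M) *\<^sub>v v = \<nu> \<cdot>\<^sub>v v"
    using ev M by (auto simp: eigenvector_def)
  have "M *\<^sub>v v = (- \<nu>) \<cdot>\<^sub>v v"
  proof (rule eq_vecI)
    fix i assume i: "i < dim_vec ((- \<nu>) \<cdot>\<^sub>v v)"
    have "((- M) *\<^sub>v v) $ i = (\<nu> \<cdot>\<^sub>v v) $ i" by (simp only: Mv)
    then show "(M *\<^sub>v v) $ i = ((- \<nu>) \<cdot>\<^sub>v v) $ i" using M v i by simp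
  qed (use M v in simp)
  then have "eigenvector M v (- \<nu>)"
    using v M by (simp add: eigenvector_def)
  then have "- \<nu> \<le> sigma_max M"
    using abs_eigenvalue_le_sigma_max[OF M sym] by fastforce
  have "x \<bullet> (M *\<^sub>v x) \<le> - \<nu> * (x \<bullet> x)"
    using min[OF x] M x by simp
  also have "\<dots> \<le> sigma_max M * (x \<bullet> x)"
    using \<open>- \<nu> \<le> sigma_max M\<close> scalar_prod_self_nonneg[of x] by (rule mult_right_mono)
  finally show ?thesis .
qed

lemma loewner_le_iff:
  assumes "A \<in> carrier_mat d d" "B \<in> carrier_mat d d"
  shows "loewner_le A B \<longleftrightarrow> (\<forall>x \<in> carrier_vec d. x \<bullet> (A *\<^sub>v x) \<le> x \<bullet> (B *\<^sub>v x))"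
  using assms by (auto simp: loewner_le_def scalar_prod_minus_mult_mat_vec)

lemma loewner_less_iff:
  assumes "A \<in> carrier_mat d d" "B \<in> carrier_mat d d"
  shows "loewner_less A B \<longleftrightarrow>
    (\<forall>x \<in> carrier_vec d. x \<noteq> 0\<^sub>v d \<longrightarrow> x \<bullet> (A *\<^sub>v x) < x \<bullet> (B *\<^sub>v x))"
  using assms by (auto simp: loewner_less_def scalar_prod_minus_mult_mat_vec)

lemma loewner_less_perturbed_gram:
  fixes H D Th :: "real mat"
  assumes H: "H \<in> carrier_mat d N" and D: "D \<in> carrier_mat d N"
    and Th: "Th \<in> carrier_mat d d" and sym: "transpose_mat Th = Th"
    and noise: "loewner_le (D * transpose_mat D) Th"
    and ratio: "sigma_min (H * transpose_mat H) / sigma_max Th > 4"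
  shows "loewner_less Th ((H + D) * transpose_mat (H + D))"
proof -
  have "(H + D) * transpose_mat (H + D) \<in> carrier_mat d d"
    using H D by (meson add_carrier_mat mult_carrier_mat transpose_carrier_mat)
  moreover have "x \<bullet> (Th *\<^sub>v x) < x \<bullet> (((H + D) * transpose_mat (H + D)) *\<^sub>v x)"
    if x: "x \<in> carrier_vec d" and x0: "x \<noteq> 0\<^sub>v d" for x
  proof -
  define a where "a = sigma_min (H * transpose_mat H)"
  define b where "b = sigma_max Th"
  define s where "s = transpose_mat H *\<^sub>v x"
  define e where "e = transpose_mat D *\<^sub>v x"
  have s: "s \<in> carrier_vec N" and e: "e \<in> carrier_vec N" using H D x by (auto simp: s_def e_def)
  have xx: "0 < x \<bullet> x" using scalar_prod_self_pos[OF x x0] .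
  have Th_le: "x \<bullet> (Th *\<^sub>v x) \<le> b * (x \<bullet> x)"
    unfolding b_def by (rule rayleigh_quotient_le_sigma_max[OF Th sym x])
  have "D * transpose_mat D \<in> carrier_mat d d" using D by simp
  then have "x \<bullet> ((D * transpose_mat D) *\<^sub>v x) \<le> x \<bullet> (Th *\<^sub>v x)"
    using noise x Th loewner_le_iff by blast
  then have e_le: "e \<bullet> e \<le> x \<bullet> (Th *\<^sub>v x)"
    unfolding scalar_prod_mult_transpose_self[OF D x] e_def .
  \<comment> \<open>\<open>b > 0\<close> is not automatic (\<open>sigma_max\<close> is a square root of a \<open>Max\<close>): the ratio
    hypothesis excludes \<open>b = 0\<close> since \<open>a / 0 = 0\<close>, and the noise bound gives \<open>b \<ge> 0\<close>.\<close>
  have "0 \<le> b * (x \<bullet> x)" using Th_le e_le scalar_prod_self_nonneg[of e] by linarith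
  then have "0 \<le> b" using xx by (simp add: zero_le_mult_iff)
  then have "4 * b < a" using ratio
    by (cases "b = 0") (auto simp: a_def b_def pos_less_divide_eq mult.commute)
  have HH: "H * transpose_mat H \<in> carrier_mat d d"
    and HH_sym: "transpose_mat (H * transpose_mat H) = H * transpose_mat H"
    using H by (auto simp: transpose_mult)
  have "sigma_min (H * transpose_mat H) * (x \<bullet> x) \<le> x \<bullet> ((H * transpose_mat H) *\<^sub>v x)"
    by (rule sigma_min_le_rayleigh_quotient[OF HH HH_sym _ x])
      (simp add: scalar_prod_mult_transpose_self[OF H] scalar_prod_self_nonneg)
  then have s_ge: "a * (x \<bullet> x) \<le> s \<bullet> s"
    unfolding a_def s_def scalar_prod_mult_transpose_self[OF H x] .
  have "4 * b * (x \<bullet> x) < a * (x \<bullet> x)"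
    using \<open>4 * b < a\<close> xx by (rule mult_strict_right_mono)
  then have "x \<bullet> (Th *\<^sub>v x) < s \<bullet> s / 2 - e \<bullet> e"
    using Th_le e_le s_ge by linarith
  also have "\<dots> \<le> (s + e) \<bullet> (s + e)" by (rule scalar_prod_add_self_ge[OF s e])
  also have "s + e = transpose_mat (H + D) *\<^sub>v x"
    unfolding s_def e_def transpose_add[OF H D] using H D x by (simp add: add_mult_distrib_mat_vec)
  also have "(transpose_mat (H + D) *\<^sub>v x) \<bullet> (transpose_mat (H + D) *\<^sub>v x)
      = x \<bullet> (((H + D) * transpose_mat (H + D)) *\<^sub>v x)"
    using H D x by (simp add: scalar_prod_mult_transpose_self[of _ d N])
  finally show ?thesis .
  qed
  ultimately show ?thesis using Th by (simp add: loewner_less_iff)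
qed

lemma hankel_yu_carrier: "hankel_yu p m l T w v \<in> carrier_mat (p * l + m * l) (T - l + 1)"
  by (simp add: hankel_yu_def)

lemma delta10_carrier: "delta10 p m l T dy du \<in> carrier_mat (p + p * l + m * l) (T - l + 1)"
  by (simp add: delta10_def)

lemma theta22_carrier: "Theta \<in> carrier_mat (p + d) (p + d) \<Longrightarrow> theta22 p Theta \<in> carrier_mat d d"
  by (simp add: theta22_def)

lemma transpose_theta22:
  assumes "transpose_mat Theta = Theta"
  shows "transpose_mat (theta22 p Theta) = theta22 p Theta"
proof -
  have square: "dim_row Theta = dim_col Theta" using arg_cong[OF assms, of dim_row] by simp
  have "Theta $$ (j, i) = Theta $$ (i, j)" if "i < dim_row Theta" "j < dim_row Theta" for i j
    using that square arg_cong[OF assms, of "\<lambda>A. A $$ (i, j)"] by simp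
  then show ?thesis using square by (intro eq_matI) (auto simp: theta22_def)
qed

lemma hankel_yu_add:
  assumes "l \<le> T"
    and w: "\<And>k. k \<le> T \<Longrightarrow> w k = w1 k + w2 k" "\<And>k. k \<le> T \<Longrightarrow> w2 k \<in> carrier_vec p"
    and v: "\<And>k. k \<le> T \<Longrightarrow> v k = v1 k + v2 k" "\<And>k. k \<le> T \<Longrightarrow> v2 k \<in> carrier_vec m"
  shows "hankel_yu p m l T w v = hankel_yu p m l T w1 v1 + hankel_yu p m l T w2 v2"
proof (rule eq_matI)
  fix i j assume "i < dim_row (hankel_yu p m l T w1 v1 + hankel_yu p m l T w2 v2)"
    and "j < dim_col (hankel_yu p m l T w1 v1 + hankel_yu p m l T w2 v2)"
  then have i: "i < p * l + m * l" and j: "j + l \<le> T" using \<open>l \<le> T\<close> by (auto simp: hankel_yu_def)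
  show "hankel_yu p m l T w v $$ (i, j) = (hankel_yu p m l T w1 v1 + hankel_yu p m l T w2 v2) $$ (i, j)"
  proof (cases "i < p * l")
    case True
    moreover have "0 < p" using True by (cases "p = 0") auto
    ultimately have "i div p < l" "i mod p < p" by (auto simp: less_mult_imp_div_less mult.commute)
    then show ?thesis using True i j w[of "j + i div p"] by (simp add: hankel_yu_def)
  next
    case False
    then have i': "i - p * l < m * l" using i by linarith
    moreover have "0 < m" using i' by (cases "m = 0") auto
    ultimately have "(i - p * l) div m < l" "(i - p * l) mod m < m"
      by (auto simp: less_mult_imp_div_less mult.commute)
    then show ?thesis using False i j v[of "j + (i - p * l) div m"] by (simp add: hankel_yu_def)
  qed
qed (auto simp: hankel_yu_def)

lemma scalar_prod_zero_append:
  assumes v: "v \<in> carrier_vec (p + d)" and x: "x \<in> carrier_vec d"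
  shows "v \<bullet> (0\<^sub>v p @\<^sub>v x) = vec_last v d \<bullet> x"
proof -
  have "v \<bullet> (0\<^sub>v p @\<^sub>v x) = (vec_first v p @\<^sub>v vec_last v d) \<bullet> (0\<^sub>v p @\<^sub>v x)"
    using v by simp
  also have "\<dots> = vec_last v d \<bullet> x"
    using x by (simp add: scalar_prod_append[of _ p _ d])
  finally show ?thesis .
qed

lemma scalar_prod_theta22:
  fixes Theta :: "real mat"
  assumes Theta: "Theta \<in> carrier_mat (p + d) (p + d)" and x: "x \<in> carrier_vec d"
  shows "(0\<^sub>v p @\<^sub>v x) \<bullet> (Theta *\<^sub>v (0\<^sub>v p @\<^sub>v x)) = x \<bullet> (theta22 p Theta *\<^sub>v x)"
proof -
  let ?z = "0\<^sub>v p @\<^sub>v x"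
  have z: "?z \<in> carrier_vec (p + d)" using x by simp
  have rows: "vec_last (row Theta (p + i)) d = row (theta22 p Theta) i" if "i < d" for i
    using Theta that by (intro eq_vecI) (auto simp: theta22_def vec_last_def add.commute)
  have Th: "theta22 p Theta \<in> carrier_mat d d" by (rule theta22_carrier[OF Theta])
  have last: "vec_last (Theta *\<^sub>v ?z) d = theta22 p Theta *\<^sub>v x"
  proof (rule eq_vecI)
    fix i assume "i < dim_vec (theta22 p Theta *\<^sub>v x)"
    then have i: "i < d" using Th by simp
    have "(Theta *\<^sub>v ?z) $ (p + i) = row Theta (p + i) \<bullet> ?z" using Theta i by simp
    also have "\<dots> = vec_last (row Theta (p + i)) d \<bullet> x"
      by (rule scalar_prod_zero_append[OF _ x]) (use Theta in \<open>metis carrier_matD(2) row_carrier\<close>)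
    also have "\<dots> = row (theta22 p Theta) i \<bullet> x" by (simp add: rows i)
    finally show "vec_last (Theta *\<^sub>v ?z) d $ i = (theta22 p Theta *\<^sub>v x) $ i"
      using i Th Theta by (simp add: vec_last_def)
  qed (use Th in simp)
  have Thetaz: "Theta *\<^sub>v ?z \<in> carrier_vec (p + d)" using Theta z by simp
  have "?z \<bullet> (Theta *\<^sub>v ?z) = (Theta *\<^sub>v ?z) \<bullet> ?z" by (rule comm_scalar_prod[OF z Thetaz])
  also have "\<dots> = (theta22 p Theta *\<^sub>v x) \<bullet> x"
    unfolding scalar_prod_zero_append[OF Thetaz x] last ..
  also have "\<dots> = x \<bullet> (theta22 p Theta *\<^sub>v x)" by (rule comm_scalar_prod) (use Th x in simp_all)
  finally show ?thesis .
qed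

lemma transpose_delta10_mult_zero_append:
  assumes x: "x \<in> carrier_vec (p * l + m * l)"
  shows "transpose_mat (delta10 p m l T dy du) *\<^sub>v (0\<^sub>v p @\<^sub>v x)
    = transpose_mat (hankel_yu p m l T dy du) *\<^sub>v x"
proof -
  define d where "d = p * l + m * l"
  define Dl where "Dl = delta10 p m l T dy du"
  define D where "D = hankel_yu p m l T dy du"
  have Dl: "Dl \<in> carrier_mat (p + d) (T - l + 1)"
    using delta10_carrier[of p m l T dy du] by (simp add: Dl_def d_def add.assoc)
  have D: "D \<in> carrier_mat d (T - l + 1)" unfolding D_def d_def by (rule hankel_yu_carrier)
  have x': "x \<in> carrier_vec d" using x by (simp add: d_def)
  have cols: "vec_last (col Dl j) d = col D j" if j: "j < T - l + 1" for j
  proof (rule eq_vecI)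
    fix i assume "i < dim_vec (col D j)"
    then have i: "i < d" using D by simp
    have "vec_last (col Dl j) d $ i = Dl $$ (p + i, j)" using Dl i j by (simp add: vec_last_def)
    also have "\<dots> = D $$ (i, j)" using i j by (simp add: Dl_def D_def delta10_def d_def add.assoc)
    finally show "vec_last (col Dl j) d $ i = col D j $ i" using D i j by simp
  qed (use D in simp)
  have "transpose_mat Dl *\<^sub>v (0\<^sub>v p @\<^sub>v x) = transpose_mat D *\<^sub>v x"
  proof (rule eq_vecI)
    fix j assume "j < dim_vec (transpose_mat D *\<^sub>v x)"
    then have j: "j < T - l + 1" using D by simp
    have "(transpose_mat Dl *\<^sub>v (0\<^sub>v p @\<^sub>v x)) $ j = col Dl j \<bullet> (0\<^sub>v p @\<^sub>v x)"
      using Dl j by simp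
    also have "\<dots> = vec_last (col Dl j) d \<bullet> x"
      by (rule scalar_prod_zero_append[OF _ x']) (use Dl in \<open>metis carrier_matD(1) col_dim\<close>)
    also have "\<dots> = (transpose_mat D *\<^sub>v x) $ j" using D j by (simp add: cols)
    finally show "(transpose_mat Dl *\<^sub>v (0\<^sub>v p @\<^sub>v x)) $ j = (transpose_mat D *\<^sub>v x) $ j" .
  qed (use Dl D in simp)
  then show ?thesis by (simp add: Dl_def D_def)
qed

lemma loewner_le_theta22:
  fixes Theta :: "real mat"
  assumes Theta: "Theta \<in> carrier_mat (p + p * l + m * l) (p + p * l + m * l)"
    and noise: "loewner_le (delta10 p m l T dy du * transpose_mat (delta10 p m l T dy du)) Theta"
  shows "loewner_le (hankel_yu p m l T dy du * transpose_mat (hankel_yu p m l T dy du))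
    (theta22 p Theta)"
proof -
  define d where "d = p * l + m * l"
  define Dl where "Dl = delta10 p m l T dy du"
  define D where "D = hankel_yu p m l T dy du"
  have Theta': "Theta \<in> carrier_mat (p + d) (p + d)" using Theta by (simp add: d_def add.assoc)
  have Dl: "Dl \<in> carrier_mat (p + d) (T - l + 1)"
    using delta10_carrier[of p m l T dy du] by (simp add: Dl_def d_def add.assoc)
  have D: "D \<in> carrier_mat d (T - l + 1)" unfolding D_def d_def by (rule hankel_yu_carrier)
  have "x \<bullet> ((D * transpose_mat D) *\<^sub>v x) \<le> x \<bullet> (theta22 p Theta *\<^sub>v x)"
    if x: "x \<in> carrier_vec d" for x
  proof -
    let ?z = "0\<^sub>v p @\<^sub>v x"
    have z: "?z \<in> carrier_vec (p + d)" using x by simp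
    have "Dl * transpose_mat Dl \<in> carrier_mat (p + d) (p + d)" using Dl by simp
    then have "?z \<bullet> ((Dl * transpose_mat Dl) *\<^sub>v ?z) \<le> ?z \<bullet> (Theta *\<^sub>v ?z)"
      using noise Theta' z loewner_le_iff unfolding Dl_def by blast
    also have "\<dots> = x \<bullet> (theta22 p Theta *\<^sub>v x)" by (rule scalar_prod_theta22[OF Theta' x])
    also have "?z \<bullet> ((Dl * transpose_mat Dl) *\<^sub>v ?z) = x \<bullet> ((D * transpose_mat D) *\<^sub>v x)"
      using x unfolding scalar_prod_mult_transpose_self[OF Dl z] scalar_prod_mult_transpose_self[OF D x]
      by (simp add: Dl_def D_def d_def transpose_delta10_mult_zero_append)
    finally show ?thesis .
  qed
  then show ?thesis
    using D theta22_carrier[OF Theta'] by (simp add: loewner_le_iff[of _ d] D_def d_def)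
qed

theorem lemma10:
  fixes n m p T l :: nat
    and As Bs Cs Theta :: "real mat"
    and x u y du dy um ym :: "nat \<Rightarrow> real vec"
  assumes As: "As \<in> carrier_mat n n" and Bs: "Bs \<in> carrier_mat n m" and Cs: "Cs \<in> carrier_mat p n"
    and obs: "observable As Cs"
    and l_def: "l = obs_index As Cs"
    and T: "T \<ge> l"
    and dims: "\<And>k. k \<le> T + 1 \<Longrightarrow> x k \<in> carrier_vec n"
      "\<And>k. k \<le> T \<Longrightarrow> u k \<in> carrier_vec m"
      "\<And>k. k \<le> T \<Longrightarrow> du k \<in> carrier_vec m"
      "\<And>k. k \<le> T \<Longrightarrow> dy k \<in> carrier_vec p"
    and dyn: "\<And>k. k \<le> T \<Longrightarrow> x (k + 1) = As *\<^sub>v x k + Bs *\<^sub>v u k"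
    and outp: "\<And>k. k \<le> T \<Longrightarrow> y k = Cs *\<^sub>v x k"
    and meas_u: "\<And>k. k \<le> T \<Longrightarrow> um k = u k + du k"
    and meas_y: "\<And>k. k \<le> T \<Longrightarrow> ym k = y k + dy k"
    and Theta: "Theta \<in> carrier_mat (p + p * l + m * l) (p + p * l + m * l)"
    and Theta_sym: "transpose_mat Theta = Theta"
    and Theta_psd: "loewner_le (0\<^sub>m (p + p * l + m * l) (p + p * l + m * l)) Theta"
    and noise: "loewner_le (delta10 p m l T dy du * transpose_mat (delta10 p m l T dy du)) Theta"
    and ratio: "sigma_min (hankel_yu p m l T y u * transpose_mat (hankel_yu p m l T y u))
                 / sigma_max (theta22 p Theta) > 4"
  shows "loewner_less (theta22 p Theta)
           (hankel_yu p m l T ym um * transpose_mat (hankel_yu p m l T ym um))"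
proof -
  have Theta': "Theta \<in> carrier_mat (p + (p * l + m * l)) (p + (p * l + m * l))"
    using Theta by (simp add: add.assoc)
  have "hankel_yu p m l T ym um = hankel_yu p m l T y u + hankel_yu p m l T dy du"
    using hankel_yu_add[OF T meas_y dims(4) meas_u dims(3)] .
  moreover have "loewner_le (hankel_yu p m l T dy du * transpose_mat (hankel_yu p m l T dy du))
      (theta22 p Theta)"
    using loewner_le_theta22[OF Theta noise] .
  ultimately show ?thesis
    using loewner_less_perturbed_gram[OF hankel_yu_carrier hankel_yu_carrier
        theta22_carrier[OF Theta'] transpose_theta22[OF Theta_sym] _ ratio]
    by simp
qed

end
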